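(* Let $\{\varphi_n\},\{\psi_n\}$ be biorthogonal sequences in a Hilbert space $\mathcal H$ and $\mathcal D,\mathcal E$ dense subspaces with $D_\psi\subseteq\mathcal D\subseteq D(\varphi)$, $D_\varphi\subseteq\mathcal E\subseteq D(\psi)$, such that $(\{\varphi_n\},\{\psi_n\})$ is a $(\mathcal D,\mathcal E)$-quasi basis. Then: (1) $D_\varphi^\perp\subseteq D(\varphi)$, where $D_\varphi^\perp$ is the orthogonal complement of $D_\varphi$; (2) if $\mathcal D\cap D_\varphi^\perp$ is dense in $D_\varphi^\perp$, then $D_\varphi$ is dense in $\mathcal H$. Similarly, $D_\psi^\perp\subseteq D(\psi)$, and if $\mathcal E\cap D_\psi^\perp$ is dense in $D_\psi^\perp$, then $D_\psi$ is dense in $\mathcal H$.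
   Context: Inner product linear in the first argument. Biorthogonal: $\langle\varphi_n,\psi_m\rangle=\delta_{nm}$. $D_\varphi,D_\psi$ are the linear spans of $\{\varphi_n\},\{\psi_n\}$; $D(\varphi)=\{x:\sum_n|\langle x,\varphi_n\rangle|^2<\infty\}$, similarly $D(\psi)$. The pair is a $(\mathcal D,\mathcal E)$-quasi basis if $\sum_k\langle x,\varphi_k\rangle\langle\psi_k,y\rangle=\langle x,y\rangle$ for all $x\in\mathcal D$, $y\in\mathcal E$. *)

theory Defs
  imports Complex_Main
begin

text \<open>A complex pre-Hilbert / Hilbert space is rendered as an additive group 'a with a
complex scalar multiplication sc (a module over complex, library locale module) and an
inner product ip, linear in the first argument.\<close>

definition complex_inner_product :: "(complex \<Rightarrow> 'a::ab_group_add \<Rightarrow> 'a) \<Rightarrow> ('a \<Rightarrow> 'a \<Rightarrow> complex) \<Rightarrow> bool" where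
  "complex_inner_product sc ip \<longleftrightarrow>
     (\<forall>x y z. ip (x + y) z = ip x z + ip y z) \<and>
     (\<forall>c x y. ip (sc c x) y = c * ip x y) \<and>
     (\<forall>x y. ip y x = cnj (ip x y)) \<and>
     (\<forall>x. Im (ip x x) = 0 \<and> Re (ip x x) \<ge> 0) \<and>
     (\<forall>x. ip x x = 0 \<longrightarrow> x = 0)"

definition ip_norm :: "('a \<Rightarrow> 'a \<Rightarrow> complex) \<Rightarrow> 'a \<Rightarrow> real" where
  "ip_norm ip x = sqrt (Re (ip x x))"

definition complex_hilbert_space :: "(complex \<Rightarrow> 'a::ab_group_add \<Rightarrow> 'a) \<Rightarrow> ('a \<Rightarrow> 'a \<Rightarrow> complex) \<Rightarrow> bool" where
  "complex_hilbert_space sc ip \<longleftrightarrow>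
     module sc \<and> complex_inner_product sc ip \<and>
     (\<forall>X::nat \<Rightarrow> 'a. (\<forall>e>0. \<exists>N. \<forall>m\<ge>N. \<forall>n\<ge>N. ip_norm ip (X m - X n) < e) \<longrightarrow>
        (\<exists>l. (\<lambda>n. ip_norm ip (X n - l)) \<longlonglongrightarrow> 0))"

definition dense_in :: "('a::ab_group_add \<Rightarrow> 'a \<Rightarrow> complex) \<Rightarrow> 'a set \<Rightarrow> 'a set \<Rightarrow> bool" where
  "dense_in ip A B \<longleftrightarrow> (\<forall>x\<in>B. \<forall>e>0. \<exists>y\<in>A. ip_norm ip (x - y) < e)"

definition orth_compl :: "('a \<Rightarrow> 'a \<Rightarrow> complex) \<Rightarrow> 'a set \<Rightarrow> 'a set" where
  "orth_compl ip S = {x. \<forall>y\<in>S. ip x y = 0}"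

definition Dseq :: "('a \<Rightarrow> 'a \<Rightarrow> complex) \<Rightarrow> (nat \<Rightarrow> 'a) \<Rightarrow> 'a set" where
  "Dseq ip phi = {x. summable (\<lambda>n. (cmod (ip x (phi n)))\<^sup>2)}"

definition biorthogonal :: "('a \<Rightarrow> 'a \<Rightarrow> complex) \<Rightarrow> (nat \<Rightarrow> 'a) \<Rightarrow> (nat \<Rightarrow> 'a) \<Rightarrow> bool" where
  "biorthogonal ip phi psi \<longleftrightarrow> (\<forall>n m. ip (phi n) (psi m) = (if n = m then 1 else 0))"

definition quasi_basis :: "('a \<Rightarrow> 'a \<Rightarrow> complex) \<Rightarrow> (nat \<Rightarrow> 'a) \<Rightarrow> (nat \<Rightarrow> 'a) \<Rightarrow> 'a set \<Rightarrow> 'a set \<Rightarrow> bool" where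
  "quasi_basis ip phi psi D E \<longleftrightarrow>
     (\<forall>x\<in>D. \<forall>y\<in>E. (\<lambda>k. ip x (phi k) * ip (psi k) y) sums ip x y)"

end

(* If x \<in> D is orthogonal to every phi_n, the quasi-basis expansion gives
   <x, y> = sum_k <x, phi_k> <psi_k, y> = 0 for all y in the dense set E, so x = 0.
   Hence D \<inter> D_phi^perp = {0}, and if it is dense in D_phi^perp then D_phi^perp = {0}.
   By the projection theorem (a minimizing sequence for the distance to D_phi is Cauchy
   by the parallelogram law, and completeness provides its limit), a subspace with
   trivial orthogonal complement is dense. The statements for psi follow by symmetry,
   since (psi, phi) is an (E, D)-quasi basis. *)

theory Submission
  imports Defs
begin

locale pre_hilbert = module sc for sc :: "complex \<Rightarrow> 'a::ab_group_add \<Rightarrow> 'a" +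
  fixes ip :: "'a \<Rightarrow> 'a \<Rightarrow> complex"
  assumes inner_product: "complex_inner_product sc ip"
begin

abbreviation sqnorm :: "'a \<Rightarrow> real" where
  "sqnorm x \<equiv> Re (ip x x)"

lemma ip_add_left: "ip (x + y) z = ip x z + ip y z"
  and ip_scale_left: "ip (sc c x) y = c * ip x y"
  and ip_cnj: "ip y x = cnj (ip x y)"
  and Im_ip_self: "Im (ip x x) = 0"
  and sqnorm_nonneg: "sqnorm x \<ge> 0"
  and ip_self_eq_0: "ip x x = 0 \<Longrightarrow> x = 0"
  using inner_product unfolding complex_inner_product_def by blast+

lemma ip_self: "ip x x = of_real (sqnorm x)"
  by (simp add: complex_eq_iff Im_ip_self)

sublocale ip_left: additive "\<lambda>x. ip x y"
  by unfold_locales (rule ip_add_left)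

lemmas ip_zero_left [simp] = ip_left.zero
  and ip_minus_left = ip_left.minus
  and ip_diff_left = ip_left.diff

lemma ip_zero_right [simp]: "ip x 0 = 0"
  by (subst ip_cnj) simp

lemma ip_add_right: "ip x (y + z) = ip x y + ip x z"
  by (subst (1 2 3) ip_cnj) (simp add: ip_add_left)

lemma ip_diff_right: "ip x (y - z) = ip x y - ip x z"
  by (subst (1 2 3) ip_cnj) (simp add: ip_diff_left)

lemma ip_scale_right: "ip x (sc c y) = cnj c * ip x y"
  by (subst (1 2) ip_cnj) (simp add: ip_scale_left)

lemma sqnorm_eq_0_iff [simp]: "sqnorm x = 0 \<longleftrightarrow> x = 0"
  using ip_self[of x] ip_self_eq_0[of x] by auto

lemma sqnorm_pos: "x \<noteq> 0 \<Longrightarrow> sqnorm x > 0"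
  using sqnorm_nonneg[of x] sqnorm_eq_0_iff[of x] by linarith

lemma sqnorm_commute: "sqnorm (x - y) = sqnorm (y - x)"
  by (metis minus_diff_eq ip_minus_left ip_cnj complex_cnj_minus)

lemma ip_norm_nonneg [simp]: "ip_norm ip x \<ge> 0"
  by (simp add: ip_norm_def sqnorm_nonneg)

lemma ip_norm_power2: "(ip_norm ip x)\<^sup>2 = sqnorm x"
  by (simp add: ip_norm_def sqnorm_nonneg)

lemma sqnorm_add: "sqnorm (x + y) = sqnorm x + sqnorm y + 2 * Re (ip x y)"
  by (simp add: ip_add_left ip_add_right ip_cnj[of x y])

lemma sqnorm_diff: "sqnorm (x - y) = sqnorm x + sqnorm y - 2 * Re (ip x y)"
  by (simp add: ip_diff_left ip_diff_right ip_cnj[of x y])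

lemma sqnorm_diff_projection:
  assumes "y \<noteq> 0"
  shows "sqnorm (x - sc (ip x y / of_real (sqnorm y)) y) = sqnorm x - (cmod (ip x y))\<^sup>2 / sqnorm y"
proof -
  define a r c where "a = ip x y" and "r = sqnorm y" and "c = a / of_real r"
  have "r \<noteq> 0"
    using assms by (simp add: r_def)
  have "ip (x - sc c y) (x - sc c y) = ip x x - cnj c * a - c * cnj a + c * cnj c * ip y y"
    by (simp add: ip_diff_left ip_diff_right ip_scale_left ip_scale_right ip_cnj[of y x] a_def algebra_simps)
  moreover have "cnj c * a = of_real ((cmod a)\<^sup>2 / r)" and "c * cnj a = of_real ((cmod a)\<^sup>2 / r)"
    and "c * cnj c * ip y y = of_real ((cmod a)\<^sup>2 / r)"
    using \<open>r \<noteq> 0\<close> complex_norm_square[of a]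
    by (simp_all add: c_def ip_self[of y, folded r_def] mult.commute)
  ultimately have "sqnorm (x - sc c y) = sqnorm x - (cmod a)\<^sup>2 / r"
    by simp
  then show ?thesis
    by (simp add: a_def r_def c_def)
qed

lemma Cauchy_Schwarz: "cmod (ip x y) \<le> ip_norm ip x * ip_norm ip y"
proof (cases "y = 0")
  case False
  have "0 \<le> sqnorm (x - sc (ip x y / of_real (sqnorm y)) y)"
    by (rule sqnorm_nonneg)
  then have "(cmod (ip x y))\<^sup>2 \<le> sqnorm x * sqnorm y"
    using sqnorm_pos[OF False] by (simp add: sqnorm_diff_projection[OF False] field_simps)
  then have "(cmod (ip x y))\<^sup>2 \<le> (ip_norm ip x * ip_norm ip y)\<^sup>2"
    by (simp add: power_mult_distrib ip_norm_power2)
  then show ?thesis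
    by (rule power2_le_imp_le) (simp add: ip_norm_def sqnorm_nonneg)
qed simp

lemma ip_eq_0_if_minimal:
  assumes "\<And>t. sqnorm w \<le> sqnorm (w - sc t v)"
  shows "ip w v = 0"
proof (cases "v = 0")
  case False
  have "(cmod (ip w v))\<^sup>2 / sqnorm v \<le> 0"
    using assms[of "ip w v / of_real (sqnorm v)"] by (simp add: sqnorm_diff_projection[OF False])
  then show ?thesis
    using sqnorm_pos[OF False] by (simp add: divide_le_0_iff)
qed simp

lemma sqnorm_diff_le_midpoint:
  assumes "d \<le> sqnorm (z - sc (1/2) (x + y))"
  shows "sqnorm (x - y) \<le> 2 * sqnorm (z - x) + 2 * sqnorm (z - y) - 4 * d"
proof -
  define m where "m = z - sc (1/2) (x + y)"
  have "sc (1/2) (x + y) + sc (1/2) (x + y) = x + y"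
    by (simp flip: scale_left_distrib)
  then have "(z - x) + (z - y) = m + m"
    by (simp add: m_def algebra_simps)
  then have "sqnorm ((z - x) + (z - y)) = 4 * sqnorm m"
    by (simp add: sqnorm_add)
  moreover have "sqnorm (x - y) = sqnorm ((z - x) - (z - y))"
    by (simp add: sqnorm_commute[of x])
  ultimately show ?thesis
    using sqnorm_add[of "z - x" "z - y"] sqnorm_diff[of "z - x" "z - y"] assms[folded m_def]
    by linarith
qed

lemma tendsto_sqnorm:
  assumes "(\<lambda>n. sqnorm (u n - l)) \<longlonglongrightarrow> 0"
  shows "(\<lambda>n. sqnorm (u n)) \<longlonglongrightarrow> sqnorm l"
proof -
  have "(\<lambda>n. ip_norm ip (u n - l)) \<longlonglongrightarrow> 0"
    using tendsto_real_sqrt[OF assms] by (simp add: ip_norm_def)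
  then have "(\<lambda>n. Re (ip (u n - l) l)) \<longlonglongrightarrow> 0"
    by (rule tendsto_0_le[where K = "ip_norm ip l"])
      (auto intro!: always_eventually order_trans[OF abs_Re_le_cmod Cauchy_Schwarz])
  then have "(\<lambda>n. sqnorm (u n - l) + sqnorm l + 2 * Re (ip (u n - l) l)) \<longlonglongrightarrow> 0 + sqnorm l + 2 * 0"
    by (intro tendsto_intros assms)
  then show ?thesis
    using sqnorm_add[of "u n - l" l for n] by simp
qed

lemma eq_0_if_orthogonal_to_dense:
  assumes "dense_in ip A UNIV" and "\<And>y. y \<in> A \<Longrightarrow> ip x y = 0"
  shows "x = 0"
proof (rule ccontr)
  assume "x \<noteq> 0"
  then have "ip_norm ip x > 0"
    using sqnorm_pos by (simp add: ip_norm_def)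
  then obtain y where "y \<in> A" and y: "ip_norm ip (x - y) < ip_norm ip x"
    using assms(1) unfolding dense_in_def by blast
  have "sqnorm x = Re (ip x (x - y))"
    using assms(2)[OF \<open>y \<in> A\<close>] by (simp add: ip_diff_right)
  also have "\<dots> \<le> ip_norm ip x * ip_norm ip (x - y)"
    using Cauchy_Schwarz complex_Re_le_cmod order_trans by blast
  also have "\<dots> < ip_norm ip x * ip_norm ip x"
    using y \<open>ip_norm ip x > 0\<close> by simp
  finally show False
    by (simp flip: ip_norm_power2 add: power2_eq_square)
qed

lemma dense_in_subset_zero:
  assumes "dense_in ip A B" and "A \<subseteq> {0}"
  shows "B \<subseteq> {0}"
proof
  fix z assume "z \<in> B"
  show "z \<in> {0}"
  proof (rule ccontr)
    assume "z \<notin> {0}"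
    then have "ip_norm ip z > 0"
      using sqnorm_pos by (simp add: ip_norm_def)
    then obtain y where "y \<in> A" and "ip_norm ip (z - y) < ip_norm ip z"
      using assms(1) \<open>z \<in> B\<close> unfolding dense_in_def by blast
    with assms(2) show False by auto
  qed
qed

lemma quasi_basis_swap:
  assumes "quasi_basis ip phi psi D E"
  shows "quasi_basis ip psi phi E D"
  unfolding quasi_basis_def
proof (intro ballI)
  fix y x assume "y \<in> E" "x \<in> D"
  then have "(\<lambda>k. ip x (phi k) * ip (psi k) y) sums ip x y"
    using assms unfolding quasi_basis_def by blast
  then have "(\<lambda>k. cnj (ip x (phi k) * ip (psi k) y)) sums cnj (ip x y)"
    by (simp only: sums_cnj)
  moreover have "cnj (ip x (phi k) * ip (psi k) y) = ip y (psi k) * ip (phi k) x" for k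
    using ip_cnj[of y "psi k"] ip_cnj[of "phi k" x] by simp
  ultimately show "(\<lambda>k. ip y (psi k) * ip (phi k) x) sums ip y x"
    using ip_cnj[of y x] by simp
qed

lemma minimizing_sequence_Cauchy:
  assumes "subspace S" and lower: "\<And>y. y \<in> S \<Longrightarrow> d \<le> sqnorm (z - y)"
    and Y: "\<And>n. Y n \<in> S" "\<And>n. sqnorm (z - Y n) < d + inverse (Suc n)"
    and "e > 0"
  shows "\<exists>N. \<forall>m\<ge>N. \<forall>n\<ge>N. ip_norm ip (Y m - Y n) < e"
proof -
  obtain N where N: "inverse (real (Suc N)) < e\<^sup>2 / 4"
    using reals_Archimedean[of "e\<^sup>2 / 4"] \<open>e > 0\<close> by auto
  have bound: "sqnorm (Y m - Y n) < e\<^sup>2" if "m \<ge> N" "n \<ge> N" for m n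
  proof -
    have "sc (1/2) (Y m + Y n) \<in> S"
      using \<open>subspace S\<close> Y(1) by (simp add: subspace_add subspace_scale)
    then have "sqnorm (Y m - Y n) \<le> 2 * sqnorm (z - Y m) + 2 * sqnorm (z - Y n) - 4 * d"
      by (intro sqnorm_diff_le_midpoint lower)
    also have "\<dots> < 2 * inverse (Suc m) + 2 * inverse (Suc n)"
      using Y(2)[of m] Y(2)[of n] by linarith
    also have "\<dots> \<le> 4 * inverse (Suc N)"
    proof -
      have "inverse (real (Suc k)) \<le> inverse (real (Suc N))" if "k \<ge> N" for k
        using that by (intro le_imp_inverse_le) auto
      from this[OF \<open>m \<ge> N\<close>] this[OF \<open>n \<ge> N\<close>] show ?thesis
        by linarith
    qed
    also have "\<dots> < e\<^sup>2"
      using N by simp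
    finally show ?thesis .
  qed
  have "ip_norm ip (Y m - Y n) < e" if "m \<ge> N" "n \<ge> N" for m n
  proof (rule power2_less_imp_less)
    show "(ip_norm ip (Y m - Y n))\<^sup>2 < e\<^sup>2"
      using bound[OF that] by (simp only: ip_norm_power2)
  qed (use \<open>e > 0\<close> in simp)
  then show ?thesis by blast
qed

end

lemma (in module) ip_eq_0_if_in_orth_compl_span:
  "x \<in> orth_compl ip (span (range f)) \<Longrightarrow> ip x (f n) = 0"
  unfolding orth_compl_def by (simp add: span_base)

lemma (in module) orth_compl_span_subset_Dseq: "orth_compl ip (span (range f)) \<subseteq> Dseq ip f"
  by (auto simp: Dseq_def ip_eq_0_if_in_orth_compl_span)

locale hilbert = pre_hilbert +
  assumes complete: "(\<And>e. e > 0 \<Longrightarrow> \<exists>N. \<forall>m\<ge>N. \<forall>n\<ge>N. ip_norm ip (X m - X n) < e)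
    \<Longrightarrow> \<exists>l. (\<lambda>n. ip_norm ip (X n - l)) \<longlonglongrightarrow> 0"

lemma hilbert_if_complex_hilbert_space: "complex_hilbert_space sc ip \<Longrightarrow> hilbert sc ip"
  unfolding complex_hilbert_space_def hilbert_def hilbert_axioms_def pre_hilbert_def pre_hilbert_axioms_def
  by blast

context hilbert
begin

text \<open>The limit l of a minimizing sequence need not lie in S, only in its closure,
  since S is not assumed closed.\<close>

lemma orthogonal_residual_in_closure:
  assumes "subspace S"
  obtains l where "\<And>v. v \<in> S \<Longrightarrow> ip (z - l) v = 0"
    and "\<And>e. e > 0 \<Longrightarrow> \<exists>y\<in>S. ip_norm ip (l - y) < e"
proof -
  define d where "d = Inf ((\<lambda>y. sqnorm (z - y)) ` S)"
  have lower: "d \<le> sqnorm (z - y)" if "y \<in> S" for y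
    unfolding d_def using that by (intro cInf_lower bdd_belowI2[of _ 0]) (auto simp: sqnorm_nonneg)
  have "\<exists>y\<in>S. sqnorm (z - y) < d + inverse (Suc n)" for n
    using cInf_lessD[of "(\<lambda>y. sqnorm (z - y)) ` S" "d + inverse (Suc n)"] subspace_0[OF assms]
    by (auto simp: d_def)
  then obtain Y where Y: "\<And>n. Y n \<in> S" "\<And>n. sqnorm (z - Y n) < d + inverse (Suc n)"
    by metis
  obtain l where "(\<lambda>n. ip_norm ip (Y n - l)) \<longlonglongrightarrow> 0"
    using complete minimizing_sequence_Cauchy[OF assms lower Y] by blast
  then have "(\<lambda>n. (ip_norm ip (Y n - l))\<^sup>2) \<longlonglongrightarrow> 0\<^sup>2"
    by (rule tendsto_power)
  then have Y_l: "(\<lambda>n. sqnorm (l - Y n)) \<longlonglongrightarrow> 0"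
    by (simp add: ip_norm_power2 sqnorm_commute[of l])
  have "(\<lambda>n. sqnorm (z - Y n)) \<longlonglongrightarrow> sqnorm (z - l)"
    by (rule tendsto_sqnorm) (simp add: Y_l)
  moreover have "(\<lambda>n. sqnorm (z - Y n)) \<longlonglongrightarrow> d"
    by (rule tendsto_sandwich[OF _ _ tendsto_const LIMSEQ_inverse_real_of_nat_add])
      (use lower Y in \<open>auto intro!: always_eventually less_imp_le simp del: of_nat_Suc\<close>)
  ultimately have "sqnorm (z - l) = d"
    by (rule LIMSEQ_unique)
  have "ip (z - l) v = 0" if "v \<in> S" for v
  proof (rule ip_eq_0_if_minimal)
    fix t
    have "(\<lambda>n. sqnorm (z - (Y n + sc t v))) \<longlonglongrightarrow> sqnorm (z - l - sc t v)"
      by (rule tendsto_sqnorm) (simp add: Y_l algebra_simps)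
    moreover have "d \<le> sqnorm (z - (Y n + sc t v))" for n
      using assms Y(1) \<open>v \<in> S\<close> by (intro lower subspace_add subspace_scale)
    ultimately show "sqnorm (z - l) \<le> sqnorm (z - l - sc t v)"
      using \<open>sqnorm (z - l) = d\<close> by (auto intro: LIMSEQ_le_const)
  qed
  moreover have "\<exists>y\<in>S. ip_norm ip (l - y) < e" if "e > 0" for e
  proof -
    have "(\<lambda>n. ip_norm ip (l - Y n)) \<longlonglongrightarrow> 0"
      using tendsto_real_sqrt[OF Y_l] by (simp add: ip_norm_def)
    then have "\<forall>\<^sub>F n in sequentially. ip_norm ip (l - Y n) < e"
      using \<open>e > 0\<close> by (rule order_tendstoD(2))
    then obtain n where "ip_norm ip (l - Y n) < e"
      by (auto simp: eventually_sequentially)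
    then show ?thesis using Y(1) by blast
  qed
  ultimately show thesis using that by blast
qed

lemma dense_if_orth_compl_trivial:
  assumes "subspace S" and "orth_compl ip S \<subseteq> {0}"
  shows "dense_in ip S UNIV"
  unfolding dense_in_def
proof (intro ballI allI impI)
  fix z :: 'a and e :: real
  assume "e > 0"
  obtain l where "\<And>v. v \<in> S \<Longrightarrow> ip (z - l) v = 0" and l: "\<And>e. e > 0 \<Longrightarrow> \<exists>y\<in>S. ip_norm ip (l - y) < e"
    using orthogonal_residual_in_closure[OF assms(1)] by blast
  then have "z - l \<in> orth_compl ip S"
    by (simp add: orth_compl_def)
  with assms(2) have "z = l" by auto
  with l \<open>e > 0\<close> show "\<exists>y\<in>S. ip_norm ip (z - y) < e" by blast
qed

lemma quasi_basis_span_dense: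
  assumes qb: "quasi_basis ip phi psi D E" and "dense_in ip E UNIV"
    and "dense_in ip (D \<inter> orth_compl ip (span (range phi))) (orth_compl ip (span (range phi)))"
  shows "dense_in ip (span (range phi)) UNIV"
proof (rule dense_if_orth_compl_trivial)
  show "orth_compl ip (span (range phi)) \<subseteq> {0}"
  proof (rule dense_in_subset_zero[OF assms(3)], safe)
    fix x assume "x \<in> D" and x_orth: "x \<in> orth_compl ip (span (range phi))"
    have "ip x y = 0" if "y \<in> E" for y
    proof -
      have "(\<lambda>k. ip x (phi k) * ip (psi k) y) sums ip x y"
        using qb \<open>x \<in> D\<close> \<open>y \<in> E\<close> unfolding quasi_basis_def by blast
      then show ?thesis
        using sums_unique2[OF _ sums_zero] by (simp add: ip_eq_0_if_in_orth_compl_span[OF x_orth])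
    qed
    with \<open>dense_in ip E UNIV\<close> show "x = 0"
      by (rule eq_0_if_orthogonal_to_dense)
  qed
qed simp

end

theorem proposition4p1:
  fixes sc :: "complex \<Rightarrow> 'a::ab_group_add \<Rightarrow> 'a"
    and ip :: "'a \<Rightarrow> 'a \<Rightarrow> complex"
    and phi psi :: "nat \<Rightarrow> 'a"
    and D E :: "'a set"
  assumes H: "complex_hilbert_space sc ip"
    and bio: "biorthogonal ip phi psi"
    and subD: "module.subspace sc D" and subE: "module.subspace sc E"
    and denseD: "dense_in ip D UNIV" and denseE: "dense_in ip E UNIV"
    and D1: "module.span sc (range psi) \<subseteq> D" and D2: "D \<subseteq> Dseq ip phi"
    and E1: "module.span sc (range phi) \<subseteq> E" and E2: "E \<subseteq> Dseq ip psi"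
    and qb: "quasi_basis ip phi psi D E"
  shows "orth_compl ip (module.span sc (range phi)) \<subseteq> Dseq ip phi
    \<and> (dense_in ip (D \<inter> orth_compl ip (module.span sc (range phi)))
                    (orth_compl ip (module.span sc (range phi)))
         \<longrightarrow> dense_in ip (module.span sc (range phi)) UNIV)
    \<and> orth_compl ip (module.span sc (range psi)) \<subseteq> Dseq ip psi
    \<and> (dense_in ip (E \<inter> orth_compl ip (module.span sc (range psi)))
                    (orth_compl ip (module.span sc (range psi)))
         \<longrightarrow> dense_in ip (module.span sc (range psi)) UNIV)"
proof -
  interpret hilbert sc ip
    using H by (rule hilbert_if_complex_hilbert_space)
  show ?thesis
    using orth_compl_span_subset_Dseq quasi_basis_span_dense[OF qb denseE]
      quasi_basis_span_dense[OF quasi_basis_swap[OF qb] denseD]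
    by blast
qed

end
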